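(* Fix $d\ge1$ and $n\ge1$. Let $\mathcal{P}'_d(n)\subset\mathcal{P}'_d\times\mathbb{C}^{nd}$ be the affine variety defined below, and let $\mathcal{P}^{(0)}_d(n)\subset\mathbb{C}^{nd}$ be its fiber over the polynomial $p=Z^d$. Then the projection $\mathcal{P}'_d(n)\to\mathcal{P}'_d$ is a finite morphism if and only if $\mathcal{P}^{(0)}_d(n)=\{0\}$.
   Context: $\mathcal{P}'_d$ denotes the space of monic degree-$d$ polynomials $p=Z^d+a_{d-1}Z^{d-1}+\dots+a_0$, identified with $\mathbb{C}^d$ via $(a_0,\dots,a_{d-1})$. Using $nd$ variables grouped as vectors $\underline z^{(k)}=(z^{(k)}_1,\dots,z^{(k)}_d)$, $0\le k<n$ (indices $k$ taken mod $n$), $\mathcal{P}'_d(n)$ is the subvariety of $\mathcal{P}'_d\times\mathbb{C}^{nd}$ defined by the equations obtained by comparing coefficients of powers of $Z$ in $$\sum_{m=1}^d (z^{(k+1)}_m-z^{(k)}_m)\prod_{j\ne m}(Z-z^{(k)}_j)=\prod_{m=1}^d(Z-z^{(k)}_m)-p(Z),\qquad k=0,\dots,n-1.$$ (These equations encode $\underline z^{(0)}\mapsto\underline z^{(1)}\mapsto\dots\mapsto\underline z^{(n-1)}\mapsto\underline z^{(0)}$ under the Weierstrass map $W_p$, where for monic $p$, $W_p(\underline z)_k=z_k-p(z_k)/\prod_{j\ne k}(z_k-z_j)$.) *)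

theory Defs
  imports Complex_Main "HOL-Computational_Algebra.Polynomial"
begin

inductive_set polyfun :: "('x \<Rightarrow> complex) set \<Rightarrow> ('x \<Rightarrow> complex) set"
  for C :: "('x \<Rightarrow> complex) set" where
  pf_const: "(\<lambda>_. c) \<in> polyfun C"
| pf_coord: "f \<in> C \<Longrightarrow> f \<in> polyfun C"
| pf_add: "f \<in> polyfun C \<Longrightarrow> g \<in> polyfun C \<Longrightarrow> (\<lambda>x. f x + g x) \<in> polyfun C"
| pf_mult: "f \<in> polyfun C \<Longrightarrow> g \<in> polyfun C \<Longrightarrow> (\<lambda>x. f x * g x) \<in> polyfun C"

text \<open>Coordinates of the base space P'_d = C^d: coefficients a_0,...,a_{d-1}
  (points are functions nat => complex, coefficients of index >= d being 0).\<close>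
definition base_coords :: "((nat \<Rightarrow> complex) \<Rightarrow> complex) set" where
  "base_coords = range (\<lambda>i a. a i)"

text \<open>Coordinates of the ambient space P'_d x C^{nd}: points are pairs (a, z),
  z k m standing for z^{(k)}_{m+1}.\<close>
definition total_coords :: "((nat \<Rightarrow> complex) \<times> (nat \<Rightarrow> nat \<Rightarrow> complex) \<Rightarrow> complex) set" where
  "total_coords = range (\<lambda>i x. fst x i) \<union> {(\<lambda>x. snd x k m) | k m. True}"

definition monic_poly :: "nat \<Rightarrow> (nat \<Rightarrow> complex) \<Rightarrow> complex poly" where
  "monic_poly d a = monom 1 d + (\<Sum>i<d. monom (a i) i)"

text \<open>The variety P'_d(n) (entries outside the index ranges are forced to be 0).\<close>
definition Pd_n :: "nat \<Rightarrow> nat \<Rightarrow> ((nat \<Rightarrow> complex) \<times> (nat \<Rightarrow> nat \<Rightarrow> complex)) set" where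
  "Pd_n d n = {(a, z).
     (\<forall>i\<ge>d. a i = 0) \<and> (\<forall>k m. (n \<le> k \<or> d \<le> m) \<longrightarrow> z k m = 0) \<and>
     (\<forall>k<n. (\<Sum>m<d. smult (z ((k + 1) mod n) m - z k m)
                         (\<Prod>j\<in>{..<d} - {m}. [:- z k j, 1:]))
            = (\<Prod>m<d. [:- z k m, 1:]) - monic_poly d a)}"

text \<open>Fiber of P'_d(n) over p = Z^d (i.e. all a_i = 0), as a subset of C^{nd}.\<close>
definition Pd0_n :: "nat \<Rightarrow> nat \<Rightarrow> (nat \<Rightarrow> nat \<Rightarrow> complex) set" where
  "Pd0_n d n = {z. ((\<lambda>_. 0), z) \<in> Pd_n d n}"

text \<open>The projection (a,z) |-> a, restricted to V = P'_d(n), is a finite morphism: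
  the coordinate ring C[V] (polynomial functions restricted to V) is a finitely
  generated module over the pulled-back ring C[a_0,...,a_{d-1}].\<close>
definition finite_projection :: "((nat \<Rightarrow> complex) \<times> (nat \<Rightarrow> nat \<Rightarrow> complex)) set \<Rightarrow> bool" where
  "finite_projection V \<longleftrightarrow>
     (\<exists>G. finite G \<and> G \<subseteq> polyfun total_coords \<and>
        (\<forall>f\<in>polyfun total_coords. \<exists>h. (\<forall>g\<in>G. h g \<in> polyfun base_coords) \<and>
           (\<forall>x\<in>V. f x = (\<Sum>g\<in>G. h g (fst x) * g x))))"

end

theory Submission
  imports Defs "HOL-Analysis.Continuum_Not_Denumerable"
    "HOL-Computational_Algebra.Fundamental_Theorem_Algebra"
begin

text \<open>Give \<open>a\<^sub>i\<close> weight \<open>d - i\<close> and every \<open>z\<close>-coordinate weight \<open>1\<close>; the defining equations are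
  weighted homogeneous, so \<open>\<complex>\<^sup>*\<close> acts on \<open>\<P>'\<^sub>d(n)\<close> and on the central fiber
  \<open>\<P>\<^sup>(\<^sup>0\<^sup>)\<^sub>d(n)\<close> by \<open>z \<mapsto> t z\<close>.

  If the projection is finite, every coordinate satisfies on each fiber a nontrivial polynomial
  relation of bounded degree; along the orbit \<open>t z\<close> of a nonzero point of the central fiber
  this relation would become a nonzero polynomial in \<open>t\<close> vanishing identically.

  Conversely, if the central fiber is \<open>{0}\<close>, then for each coordinate \<open>z\<close> the coefficients of the
  equations, the \<open>a\<^sub>i\<close> and \<open>z - 1\<close> have no common zero, so by the weak Nullstellensatz \<open>1\<close> lies in
  the ideal they generate. Homogenizing this identity writes a power \<open>z\<^sup>N\<close> as a combination of
  the equation coefficients and the \<open>a\<^sub>i\<close> whose \<open>a\<^sub>i\<close>-terms have lower degree in the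
  \<open>z\<close>-coordinates. On the variety, repeated rewriting reduces every monomial to a combination,
  with coefficients polynomial in \<open>a\<close>, of the finitely many \<open>z\<close>-monomials of bounded degree.\<close>

section \<open>Polynomial functions\<close>

lemma polyfun_sum:
  "finite S \<Longrightarrow> (\<And>i. i \<in> S \<Longrightarrow> f i \<in> polyfun C) \<Longrightarrow> (\<lambda>x. \<Sum>i\<in>S. f i x) \<in> polyfun C"
  by (induction S rule: finite_induct) (auto intro: pf_add pf_const[of 0, simplified])

lemma polyfun_prod:
  "finite S \<Longrightarrow> (\<And>i. i \<in> S \<Longrightarrow> f i \<in> polyfun C) \<Longrightarrow> (\<lambda>x. \<Prod>i\<in>S. f i x) \<in> polyfun C"
  by (induction S rule: finite_induct) (auto intro: pf_mult pf_const)

lemma polyfun_sum_list: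
  "(\<And>y. y \<in> set L \<Longrightarrow> f y \<in> polyfun C) \<Longrightarrow> (\<lambda>x. \<Sum>y\<leftarrow>L. f y x) \<in> polyfun C"
  by (induction L) (auto intro: pf_add pf_const[of 0, simplified])

lemma polyfun_prod_list:
  "(\<And>y. y \<in> set L \<Longrightarrow> f y \<in> polyfun C) \<Longrightarrow> (\<lambda>x. \<Prod>y\<leftarrow>L. f y x) \<in> polyfun C"
  by (induction L) (auto intro: pf_mult pf_const)

lemma polyfun_cmult: "f \<in> polyfun C \<Longrightarrow> (\<lambda>x. c * f x) \<in> polyfun C"
  using pf_mult[OF pf_const] by blast

lemma polyfun_diff: "f \<in> polyfun C \<Longrightarrow> g \<in> polyfun C \<Longrightarrow> (\<lambda>x. f x - g x) \<in> polyfun C"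
  using pf_add[OF _ polyfun_cmult[of g C "-1"], of f] by simp

lemma polyfun_power: "f \<in> polyfun C \<Longrightarrow> (\<lambda>x. f x ^ k) \<in> polyfun C"
  by (induction k) (auto intro: pf_mult pf_const)

lemma polyfun_poly: "f \<in> polyfun C \<Longrightarrow> (\<lambda>x. poly P (f x)) \<in> polyfun C"
  by (induction P) (auto intro: pf_add pf_const pf_mult pf_const[of 0, simplified])

lemma polyfun_cong: "f \<in> polyfun C \<Longrightarrow> (\<And>c. c \<in> C \<Longrightarrow> c x = c y) \<Longrightarrow> f x = f y"
  by (induction rule: polyfun.induct) auto

lemma nontrivial_relation_if_card_less:
  fixes B :: "'a \<Rightarrow> 'b \<Rightarrow> 'c::field"
  assumes "finite S" "finite T" "card S < card T"
  shows "\<exists>l. (\<exists>j\<in>T. l j \<noteq> 0) \<and> (\<forall>g\<in>S. (\<Sum>j\<in>T. l j * B j g) = 0)"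
  using assms
proof (induction S arbitrary: T B rule: finite_induct)
  case empty
  then obtain j0 where "j0 \<in> T" by fastforce
  then show ?case by (intro exI[of _ "\<lambda>_. 1"]) auto
next
  case (insert g S)
  show ?case
  \<comment> \<open>Gaussian elimination: clear the coordinate \<open>g\<close> with a vector \<open>j0\<close> not vanishing there\<close>
  proof (cases "\<forall>j\<in>T. B j g = 0")
    case True
    have "card S < card T" using insert.prems insert.hyps by simp
    from insert.IH[OF insert.prems(1) this]
    obtain l where l: "\<exists>j\<in>T. l j \<noteq> 0" "\<forall>g\<in>S. (\<Sum>j\<in>T. l j * B j g) = 0"
      by blast
    then show ?thesis using True by (intro exI[of _ l]) auto
  next
    case False
    then obtain j0 where j0: "j0 \<in> T" "B j0 g \<noteq> 0" by auto
    define T' where "T' = T - {j0}"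
    define B' where "B' = (\<lambda>j h. B j h - (B j g / B j0 g) * B j0 h)"
    have fT': "finite T'" using insert.prems unfolding T'_def by auto
    have cT: "card T = Suc (card T')" using j0 insert.prems unfolding T'_def
      by (simp add: card_Suc_Diff1)
    have "card S < card T'" using insert.prems insert.hyps cT by simp
    from insert.IH[OF fT' this, of B'] obtain l' where
      l': "\<exists>j\<in>T'. l' j \<noteq> 0" "\<forall>h\<in>S. (\<Sum>j\<in>T'. l' j * B' j h) = 0" by blast
    define l where "l = (\<lambda>j. if j = j0 then - (\<Sum>j\<in>T'. l' j * B j g) / B j0 g else l' j)"
    have Tsplit: "\<And>F. (\<Sum>j\<in>T. F j) = F j0 + (\<Sum>j\<in>T'. F j)"
      using j0 insert.prems unfolding T'_def by (simp add: sum.remove)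
    have lT': "\<And>F. (\<Sum>j\<in>T'. l j * F j) = (\<Sum>j\<in>T'. l' j * F j)"
      unfolding l_def T'_def by (rule sum.cong) auto
    have col_g: "(\<Sum>j\<in>T. l j * B j g) = 0"
      unfolding Tsplit lT' using j0 by (simp add: l_def)
    have col_h: "(\<Sum>j\<in>T. l j * B j h) = 0" if h: "h \<in> S" for h
    proof -
      have "(\<Sum>j\<in>T'. l' j * B j h) = (\<Sum>j\<in>T'. l' j * B' j h + l' j * B j g / B j0 g * B j0 h)"
        by (rule sum.cong) (simp_all add: B'_def right_diff_distrib)
      also have "\<dots> = (\<Sum>j\<in>T'. l' j * B' j h) + (\<Sum>j\<in>T'. l' j * B j g) / B j0 g * B j0 h"
        by (simp add: sum.distrib sum_distrib_right sum_divide_distrib)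
      also have "\<dots> = (\<Sum>j\<in>T'. l' j * B j g) / B j0 g * B j0 h"
        using l'(2) h by simp
      finally have "(\<Sum>j\<in>T'. l' j * B j h) = (\<Sum>j\<in>T'. l' j * B j g) / B j0 g * B j0 h" .
      then show ?thesis unfolding Tsplit lT' by (simp add: l_def)
    qed
    have "\<exists>j\<in>T. l j \<noteq> 0" using l'(1) unfolding l_def T'_def by auto
    then show ?thesis using col_g col_h by (intro exI[of _ l]) auto
  qed
qed

lemma lagrange_combination_nonzero:
  fixes l :: "complex \<Rightarrow> complex"
  assumes T: "finite T" and c0: "c0 \<in> T" "l c0 \<noteq> 0"
  shows "(\<Sum>c\<in>T. smult (l c) (\<Prod>c'\<in>T - {c}. [:- c', 1:])) \<noteq> 0"
proof
  assume "(\<Sum>c\<in>T. smult (l c) (\<Prod>c'\<in>T - {c}. [:- c', 1:])) = 0"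
  then have "poly (\<Sum>c\<in>T. smult (l c) (\<Prod>c'\<in>T - {c}. [:- c', 1:])) c0 = 0" by simp
  then have "(\<Sum>c\<in>T. l c * (\<Prod>c'\<in>T - {c}. c0 - c')) = 0"
    by (simp add: poly_sum poly_prod)
  moreover have "(\<Sum>c\<in>T. l c * (\<Prod>c'\<in>T - {c}. c0 - c')) = l c0 * (\<Prod>c'\<in>T - {c0}. c0 - c')"
    \<comment> \<open>every other summand contains the factor \<open>c0 - c0\<close>\<close>
    using T c0 by (subst sum.remove[of _ c0]) (auto intro!: sum.neutral prod_zero)
  moreover have "(\<Prod>c'\<in>T - {c0}. c0 - c') \<noteq> 0" using T by (simp add: prod_zero_iff)
  ultimately show False using c0 by simp
qed

lemma poly_lagrange_combination:
  fixes z :: complex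
  assumes T: "finite T" and one: "\<And>c. m c + u c * (z - c) = 1"
  shows "poly (\<Sum>c\<in>T. smult (l c) (\<Prod>c'\<in>T - {c}. [:- c', 1:])) z
    = (\<Sum>c\<in>T. l c * (\<Prod>c'\<in>T - {c}. z - c') * m c) + (\<Sum>c\<in>T. l c * u c) * (\<Prod>c'\<in>T. z - c')"
proof -
  have "l c * (\<Prod>c'\<in>T - {c}. z - c')
      = l c * (\<Prod>c'\<in>T - {c}. z - c') * m c + l c * u c * (\<Prod>c'\<in>T. z - c')" if "c \<in> T" for c
  proof -
    have "l c * (\<Prod>c'\<in>T - {c}. z - c') = l c * (\<Prod>c'\<in>T - {c}. z - c') * (m c + u c * (z - c))"
      using one[of c] by simp
    also have "\<dots> = l c * (\<Prod>c'\<in>T - {c}. z - c') * m c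
        + l c * u c * ((z - c) * (\<Prod>c'\<in>T - {c}. z - c'))"
      by (simp add: algebra_simps)
    also have "(z - c) * (\<Prod>c'\<in>T - {c}. z - c') = (\<Prod>c'\<in>T. z - c')"
      using T that by (simp add: prod.remove)
    finally show ?thesis .
  qed
  then have "(\<Sum>c\<in>T. l c * (\<Prod>c'\<in>T - {c}. z - c'))
      = (\<Sum>c\<in>T. l c * (\<Prod>c'\<in>T - {c}. z - c') * m c + l c * u c * (\<Prod>c'\<in>T. z - c'))"
    by (rule sum.cong[OF refl])
  then show ?thesis by (simp add: poly_sum poly_prod sum.distrib sum_distrib_right)
qed

section \<open>The weak Nullstellensatz\<close>

locale coordinate_space =
  fixes coord :: "'x \<Rightarrow> 'v::countable \<Rightarrow> complex"
  assumes surj_coord: "surj coord"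
begin

abbreviation polys :: "('x \<Rightarrow> complex) set" where
  "polys \<equiv> polyfun (range (\<lambda>v x. coord x v))"

lemma coord_in_polys: "(\<lambda>x. coord x v) \<in> polys"
  by (rule pf_coord) auto

lemma polys_cong: "f \<in> polys \<Longrightarrow> coord x = coord y \<Longrightarrow> f x = f y"
  by (erule polyfun_cong) auto

definition monomial :: "'v list \<Rightarrow> 'x \<Rightarrow> complex" where
  "monomial L x = (\<Prod>v\<leftarrow>L. coord x v)"

definition lincomb :: "(complex \<times> 'v list) list \<Rightarrow> 'x \<Rightarrow> complex" where
  "lincomb R x = (\<Sum>p\<leftarrow>R. fst p * monomial (snd p) x)"

lemma monomial_append: "monomial (L1 @ L2) x = monomial L1 x * monomial L2 x"
  by (simp add: monomial_def)

lemma monomial_replicate: "monomial (replicate k v) x = coord x v ^ k"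
  by (induction k) (auto simp: monomial_def)

lemma monomial_in_polys: "monomial L \<in> polys"
  unfolding monomial_def[abs_def] by (rule polyfun_prod_list) (rule coord_in_polys)

lemma lincomb_in_polys: "lincomb R \<in> polys"
  unfolding lincomb_def[abs_def] by (intro polyfun_sum_list polyfun_cmult monomial_in_polys)

lemma lincomb_append: "lincomb (R1 @ R2) x = lincomb R1 x + lincomb R2 x"
  by (simp add: lincomb_def)

lemma lincomb_times:
  "lincomb (concat (map (\<lambda>p. map (\<lambda>q. (fst p * fst q, snd p @ snd q)) R2) R1)) x
     = lincomb R1 x * lincomb R2 x"
proof -
  have "lincomb (map (\<lambda>q. (a * fst q, L @ snd q)) R2) x = a * monomial L x * lincomb R2 x" for a L
    by (induction R2) (auto simp: lincomb_def monomial_append algebra_simps)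
  then show ?thesis
    by (induction R1) (auto simp: lincomb_append, auto simp: lincomb_def algebra_simps)
qed

lemma polys_eq_lincomb: "f \<in> polys \<Longrightarrow> \<exists>R. f = lincomb R"
proof (induction rule: polyfun.induct)
  case (pf_const c)
  show ?case by (intro exI[of _ "[(c, [])]"]) (auto simp: lincomb_def monomial_def)
next
  case (pf_coord f)
  then obtain v where "f = (\<lambda>x. coord x v)" by auto
  then show ?case by (intro exI[of _ "[(1, [v])]"]) (auto simp: lincomb_def monomial_def)
next
  case (pf_add f g)
  then obtain R1 R2 where "f = lincomb R1" "g = lincomb R2" by blast
  then show ?case by (intro exI[of _ "R1 @ R2"]) (auto simp: lincomb_append)
next
  case (pf_mult f g)
  then obtain R1 R2 where "f = lincomb R1" "g = lincomb R2" by blast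
  then show ?case
    by (intro exI[of _ "concat (map (\<lambda>p. map (\<lambda>q. (fst p * fst q, snd p @ snd q)) R2) R1)"])
       (auto simp: lincomb_times)
qed

lemma polys_restrict_to_line:
  "f \<in> polys \<Longrightarrow> \<exists>P. \<forall>s. f (inv coord ((coord x)(v := s))) = poly P s"
proof (induction rule: polyfun.induct)
  case (pf_const c)
  show ?case by (intro exI[of _ "[:c:]"]) simp
next
  case (pf_coord f)
  then obtain w where f: "f = (\<lambda>x. coord x w)" by auto
  have coord_inv: "coord (inv coord \<phi>) = \<phi>" for \<phi> by (rule surj_f_inv_f[OF surj_coord])
  show ?case
  proof (cases "w = v")
    case True then show ?thesis using f by (intro exI[of _ "[:0, 1:]"]) (simp add: coord_inv)
  next
    case False then show ?thesis using f by (intro exI[of _ "[:coord x w:]"]) (simp add: coord_inv)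
  qed
next
  case (pf_add f g)
  then obtain P Q where "\<forall>s. f (inv coord ((coord x)(v := s))) = poly P s"
    "\<forall>s. g (inv coord ((coord x)(v := s))) = poly Q s" by blast
  then show ?case by (intro exI[of _ "P + Q"]) (simp only: poly_add simp_thms)
next
  case (pf_mult f g)
  then obtain P Q where "\<forall>s. f (inv coord ((coord x)(v := s))) = poly P s"
    "\<forall>s. g (inv coord ((coord x)(v := s))) = poly Q s" by blast
  then show ?case by (intro exI[of _ "P * Q"]) (simp only: poly_mult simp_thms)
qed

text \<open>On every coordinate line a polynomial is univariate, hence vanishes if it has infinitely
  many roots.\<close>
lemma polys_vanish_if_vanish_off_hyperplane:
  assumes f: "f \<in> polys" and off: "\<And>x. coord x v \<noteq> 0 \<Longrightarrow> f x = 0"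
  shows "f x = 0"
proof -
  let ?pt = "\<lambda>s. inv coord ((coord x)(v := s))"
  have coord_pt: "coord (?pt s) = (coord x)(v := s)" for s by (rule surj_f_inv_f[OF surj_coord])
  obtain P where P: "\<And>s. f (?pt s) = poly P s" using polys_restrict_to_line[OF f] by blast
  have "{s. s \<noteq> 0} \<subseteq> {s. poly P s = 0}"
    using off[of "?pt _"] P by (auto simp: coord_pt)
  moreover have "infinite {s::complex. s \<noteq> 0}"
    using Diff_infinite_finite[OF finite.insertI[OF finite.emptyI] infinite_UNIV_char_0]
    by (simp add: set_diff_eq)
  ultimately have "P = 0" using poly_roots_finite finite_subset by metis
  moreover have "f x = f (?pt (coord x v))"
    by (rule polys_cong[OF f]) (simp add: surj_f_inv_f[OF surj_coord])
  ultimately show ?thesis using P[of "coord x v"] by simp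
qed

lemma polys_uncountable_family_dependent:
  fixes u :: "complex \<Rightarrow> 'x \<Rightarrow> complex"
  assumes u: "\<And>c. u c \<in> polys"
  shows "\<exists>T l. finite T \<and> (\<exists>c\<in>T. l c \<noteq> 0) \<and> (\<forall>x. (\<Sum>c\<in>T. l c * u c x) = 0)"
proof -
  obtain R where R: "\<And>c. u c = lincomb (R c)" using polys_eq_lincomb[OF u] by metis
  \<comment> \<open>uncountably many \<open>u c\<close> share the same list of monomials, as there are only countably
    many lists\<close>
  have "\<exists>s. infinite {c. map snd (R c) = s}"
  proof (rule ccontr)
    assume "\<nexists>s. infinite {c. map snd (R c) = s}"
    then have "countable (\<Union>s. {c. map snd (R c) = s})"
      by (intro countable_UN) (auto intro: countable_finite)
    moreover have "(\<Union>s. {c. map snd (R c) = s}) = UNIV" by auto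
    ultimately show False using uncountable_UNIV_complex by simp
  qed
  then obtain s where "infinite {c. map snd (R c) = s}" by blast
  then obtain T where T: "finite T" "card T = Suc (length s)" "T \<subseteq> {c. map snd (R c) = s}"
    using infinite_arbitrarily_large by blast
  have uT: "u c x = (\<Sum>i<length s. fst (R c ! i) * monomial (s ! i) x)" if "c \<in> T" for c x
  proof -
    have s: "s = map snd (R c)" using T that by auto
    show ?thesis unfolding R lincomb_def s
      by (simp add: sum_list_sum_nth atLeast0LessThan)
  qed
  obtain l where l: "\<exists>c\<in>T. l c \<noteq> 0" "\<forall>i\<in>{..<length s}. (\<Sum>c\<in>T. l c * fst (R c ! i)) = 0"
    using nontrivial_relation_if_card_less[of "{..<length s}" T "\<lambda>c i. fst (R c ! i)"] T by auto
  have "(\<Sum>c\<in>T. l c * u c x) = (\<Sum>i<length s. (\<Sum>c\<in>T. l c * fst (R c ! i)) * monomial (s ! i) x)" for x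
    by (simp add: uT sum_distrib_left sum_distrib_right mult.assoc cong: sum.cong)
       (rule sum.swap)
  then show ?thesis using T(1) l by (intro exI[of _ T] exI[of _ l]) simp
qed

definition poly_ideal :: "('x \<Rightarrow> complex) set \<Rightarrow> bool" where
  "poly_ideal K \<longleftrightarrow> K \<subseteq> polys \<and> (\<lambda>_. 0) \<in> K \<and> (\<forall>f\<in>K. \<forall>g\<in>K. (\<lambda>x. f x + g x) \<in> K)
     \<and> (\<forall>f\<in>K. \<forall>g\<in>polys. (\<lambda>x. g x * f x) \<in> K)"

definition maximal_poly_ideal :: "('x \<Rightarrow> complex) set \<Rightarrow> bool" where
  "maximal_poly_ideal M \<longleftrightarrow> poly_ideal M \<and> (\<lambda>_. 1) \<notin> M \<and>
     (\<forall>K. poly_ideal K \<longrightarrow> M \<subseteq> K \<longrightarrow> (\<lambda>_. 1) \<notin> K \<longrightarrow> K = M)"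

lemma poly_ideal_subset: "poly_ideal K \<Longrightarrow> f \<in> K \<Longrightarrow> f \<in> polys"
  by (auto simp: poly_ideal_def)

lemma poly_ideal_zero: "poly_ideal K \<Longrightarrow> (\<lambda>_. 0) \<in> K"
  by (auto simp: poly_ideal_def)

lemma poly_ideal_add: "poly_ideal K \<Longrightarrow> f \<in> K \<Longrightarrow> g \<in> K \<Longrightarrow> (\<lambda>x. f x + g x) \<in> K"
  by (auto simp: poly_ideal_def)

lemma poly_ideal_mult: "poly_ideal K \<Longrightarrow> f \<in> K \<Longrightarrow> g \<in> polys \<Longrightarrow> (\<lambda>x. g x * f x) \<in> K"
  by (auto simp: poly_ideal_def)

lemma poly_ideal_diff: "poly_ideal K \<Longrightarrow> f \<in> K \<Longrightarrow> g \<in> K \<Longrightarrow> (\<lambda>x. f x - g x) \<in> K"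
  using poly_ideal_add[OF _ _ poly_ideal_mult[OF _ _ pf_const[of "-1"]], of K f g] by simp

lemma poly_ideal_sum:
  assumes "poly_ideal K"
  shows "finite S \<Longrightarrow> (\<And>i. i \<in> S \<Longrightarrow> f i \<in> K) \<Longrightarrow> (\<lambda>x. \<Sum>i\<in>S. f i x) \<in> K"
  by (induction S rule: finite_induct) (auto intro: poly_ideal_add poly_ideal_zero assms)

lemma poly_ideal_one_if_const: "poly_ideal K \<Longrightarrow> c \<noteq> 0 \<Longrightarrow> (\<lambda>_. c) \<in> K \<Longrightarrow> (\<lambda>_. 1) \<in> K"
  using poly_ideal_mult[of K "\<lambda>_. c" "\<lambda>_. 1 / c"] by (simp add: pf_const)

lemma poly_ideal_generated:
  assumes J: "finite J" and g: "\<And>j. j \<in> J \<Longrightarrow> g j \<in> polys"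
  shows "poly_ideal {f. \<exists>q. (\<forall>j\<in>J. q j \<in> polys) \<and> f = (\<lambda>x. \<Sum>j\<in>J. q j x * g j x)}"
  unfolding poly_ideal_def
proof (intro conjI ballI subsetI; clarify)
  fix q assume "\<forall>j\<in>J. q j \<in> polys"
  then show "(\<lambda>x. \<Sum>j\<in>J. q j x * g j x) \<in> polys" using J g by (auto intro!: polyfun_sum pf_mult)
next
  show "\<exists>q. (\<forall>j\<in>J. q j \<in> polys) \<and> (\<lambda>_. 0) = (\<lambda>x. \<Sum>j\<in>J. q j x * g j x)"
    by (intro exI[of _ "\<lambda>_ _. 0"]) (auto intro: pf_const)
next
  fix q1 q2 assume "\<forall>j\<in>J. q1 j \<in> polys" "\<forall>j\<in>J. q2 j \<in> polys"
  then show "\<exists>q. (\<forall>j\<in>J. q j \<in> polys) \<and>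
      (\<lambda>x. (\<Sum>j\<in>J. q1 j x * g j x) + (\<Sum>j\<in>J. q2 j x * g j x)) = (\<lambda>x. \<Sum>j\<in>J. q j x * g j x)"
    by (intro exI[of _ "\<lambda>j x. q1 j x + q2 j x"])
       (auto intro: pf_add simp: sum.distrib algebra_simps)
next
  fix q h assume "\<forall>j\<in>J. q j \<in> polys" "h \<in> polys"
  then show "\<exists>q'. (\<forall>j\<in>J. q' j \<in> polys) \<and>
      (\<lambda>x. h x * (\<Sum>j\<in>J. q j x * g j x)) = (\<lambda>x. \<Sum>j\<in>J. q' j x * g j x)"
    by (intro exI[of _ "\<lambda>j x. h x * q j x"])
       (auto intro: pf_mult simp: sum_distrib_left algebra_simps)
qed

lemma exists_maximal_poly_ideal:
  assumes I: "poly_ideal I" "(\<lambda>_. 1) \<notin> I"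
  shows "\<exists>M. maximal_poly_ideal M \<and> I \<subseteq> M"
proof -
  define S where "S = {K. poly_ideal K \<and> I \<subseteq> K \<and> (\<lambda>_. 1) \<notin> K}"
  have "\<exists>U\<in>S. \<forall>X\<in>C. X \<subseteq> U" if C: "C \<in> chains S" for C
  proof (cases "C = {}")
    case True then show ?thesis using I unfolding S_def by auto
  next
    case False
    have CS: "C \<subseteq> S" and chain: "\<And>X Y. X \<in> C \<Longrightarrow> Y \<in> C \<Longrightarrow> X \<subseteq> Y \<or> Y \<subseteq> X"
      using C unfolding chains_def chain_subset_def by auto
    have "poly_ideal (\<Union>C)" unfolding poly_ideal_def
    proof (intro conjI ballI subsetI)
      fix f assume "f \<in> \<Union>C" then show "f \<in> polys" using CS unfolding S_def poly_ideal_def by blast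
    next
      show "(\<lambda>_. 0) \<in> \<Union>C" using False CS unfolding S_def poly_ideal_def by blast
    next
      fix f g assume "f \<in> \<Union>C" "g \<in> \<Union>C"
      then obtain X Y where XY: "X \<in> C" "Y \<in> C" "f \<in> X" "g \<in> Y" by auto
      then have "f \<in> X \<union> Y" "g \<in> X \<union> Y" "X \<union> Y \<in> C"
        using chain[OF XY(1,2)] by (auto simp: sup_absorb1 sup_absorb2)
      then show "(\<lambda>x. f x + g x) \<in> \<Union>C" using CS unfolding S_def poly_ideal_def by blast
    next
      fix f g assume "f \<in> \<Union>C" "g \<in> polys"
      then show "(\<lambda>x. g x * f x) \<in> \<Union>C" using CS unfolding S_def poly_ideal_def by blast
    qed
    moreover have "I \<subseteq> \<Union>C" "(\<lambda>_. 1) \<notin> \<Union>C" using False CS unfolding S_def by blast+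
    ultimately show ?thesis unfolding S_def by (intro bexI[of _ "\<Union>C"]) auto
  qed
  then obtain M where "M \<in> S" "\<forall>X\<in>S. M \<subseteq> X \<longrightarrow> X = M"
    using Zorn_Lemma2[of S] by blast
  then show ?thesis unfolding S_def maximal_poly_ideal_def by blast
qed

lemma poly_ideal_adjoin:
  assumes M: "poly_ideal M" and g: "g \<in> polys"
  shows "poly_ideal {f. \<exists>m\<in>M. \<exists>u\<in>polys. f = (\<lambda>x. m x + u x * g x)}"
  unfolding poly_ideal_def
proof (intro conjI ballI subsetI; clarify)
  fix m u assume "m \<in> M" "u \<in> polys"
  then show "(\<lambda>x. m x + u x * g x) \<in> polys" using M g
    by (auto intro!: pf_add pf_mult dest: poly_ideal_subset)
next
  show "\<exists>m\<in>M. \<exists>u\<in>polys. (\<lambda>_. 0) = (\<lambda>x. m x + u x * g x)"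
    using poly_ideal_zero[OF M] pf_const[of 0] by (intro bexI[of _ "\<lambda>_. 0"]) auto
next
  fix m1 u1 m2 u2 assume h: "m1 \<in> M" "u1 \<in> polys" "m2 \<in> M" "u2 \<in> polys"
  have "(\<lambda>x. m1 x + m2 x) \<in> M" using h M by (intro poly_ideal_add) auto
  moreover have "(\<lambda>x. u1 x + u2 x) \<in> polys" using h by (intro pf_add) auto
  ultimately show "\<exists>m\<in>M. \<exists>u\<in>polys.
      (\<lambda>x. m1 x + u1 x * g x + (m2 x + u2 x * g x)) = (\<lambda>x. m x + u x * g x)"
    by (intro bexI[of _ "\<lambda>x. m1 x + m2 x"] bexI[of _ "\<lambda>x. u1 x + u2 x"]) (auto simp: algebra_simps)
next
  fix m u h assume mu: "m \<in> M" "u \<in> polys" "h \<in> polys"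
  have "(\<lambda>x. h x * m x) \<in> M" using mu M by (intro poly_ideal_mult) auto
  moreover have "(\<lambda>x. h x * u x) \<in> polys" using mu by (intro pf_mult) auto
  ultimately show "\<exists>m'\<in>M. \<exists>u'\<in>polys.
      (\<lambda>x. h x * (m x + u x * g x)) = (\<lambda>x. m' x + u' x * g x)"
    by (intro bexI[of _ "\<lambda>x. h x * m x"] bexI[of _ "\<lambda>x. h x * u x"]) (auto simp: algebra_simps)
qed

lemma maximal_poly_ideal_inverse:
  assumes M: "maximal_poly_ideal M" and g: "g \<in> polys" "g \<notin> M"
  shows "\<exists>u\<in>polys. \<exists>m\<in>M. \<forall>x. m x + u x * g x = 1"
proof -
  have M_ideal: "poly_ideal M" using M by (simp add: maximal_poly_ideal_def)
  define K where "K = {f. \<exists>m\<in>M. \<exists>u\<in>polys. f = (\<lambda>x. m x + u x * g x)}"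
  have "poly_ideal K" unfolding K_def using M_ideal g(1) by (rule poly_ideal_adjoin)
  moreover have "M \<subseteq> K"
  proof
    fix f assume "f \<in> M"
    then show "f \<in> K" unfolding K_def
      by (intro CollectI bexI[of _ f] bexI[of _ "\<lambda>_. 0"]) (auto intro: pf_const)
  qed
  moreover have "g \<in> K" unfolding K_def using poly_ideal_zero[OF M_ideal] pf_const[of 1]
    by (intro CollectI bexI[of _ "\<lambda>_. 0"] bexI[of _ "\<lambda>_. 1"]) auto
  ultimately have "(\<lambda>_. 1) \<in> K" using M g unfolding maximal_poly_ideal_def by blast
  then obtain m u where "m \<in> M" "u \<in> polys" "(\<lambda>_. 1) = (\<lambda>x. m x + u x * g x)"
    unfolding K_def by blast
  then show ?thesis by metis
qed

lemma maximal_poly_ideal_prime: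
  assumes M: "maximal_poly_ideal M" and fg: "f \<in> polys" "g \<in> polys" "(\<lambda>x. f x * g x) \<in> M" "f \<notin> M"
  shows "g \<in> M"
proof -
  have M_ideal: "poly_ideal M" using M by (simp add: maximal_poly_ideal_def)
  obtain u m where um: "u \<in> polys" "m \<in> M" "\<And>x. m x + u x * f x = 1"
    using maximal_poly_ideal_inverse[OF M fg(1,4)] by blast
  have "(\<lambda>x. g x * m x + u x * (f x * g x)) \<in> M"
    using poly_ideal_add[OF M_ideal poly_ideal_mult[OF M_ideal um(2) fg(2)]
        poly_ideal_mult[OF M_ideal fg(3) um(1)]] by simp
  moreover have "g x * m x + u x * (f x * g x) = g x * (m x + u x * f x)" for x
    by (simp add: algebra_simps)
  then have "(\<lambda>x. g x * m x + u x * (f x * g x)) = g" by (simp add: um(3))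
  ultimately show ?thesis by simp
qed

lemma maximal_poly_ideal_const: "maximal_poly_ideal M \<Longrightarrow> c \<noteq> 0 \<Longrightarrow> (\<lambda>_. c) \<notin> M"
  using poly_ideal_one_if_const unfolding maximal_poly_ideal_def by blast

lemma maximal_poly_ideal_linear_factor:
  assumes M: "maximal_poly_ideal M" and y: "y \<in> polys"
  shows "P \<noteq> 0 \<Longrightarrow> (\<lambda>x. poly P (y x)) \<in> M \<Longrightarrow> \<exists>c. (\<lambda>x. y x - c) \<in> M"
proof (induction "degree P" arbitrary: P rule: less_induct)
  case less
  show ?case
  proof (cases "degree P = 0")
    case True
    then obtain a where "P = [:a:]" by (meson degree_eq_zeroE)
    then show ?thesis using less.prems maximal_poly_ideal_const[OF M] by auto
  next
    case False
    then have "\<not> constant (poly P)" by (simp add: constant_degree)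
    then obtain z0 where "poly P z0 = 0" using fundamental_theorem_of_algebra by blast
    then obtain Q where PQ: "P = [:- z0, 1:] * Q" by (meson dvdE poly_eq_0_iff_dvd)
    then have Q0: "Q \<noteq> 0" using less.prems by auto
    then have dQ: "degree Q < degree P" unfolding PQ by (subst degree_mult_eq) auto
    have "(\<lambda>x. (y x - z0) * poly Q (y x)) \<in> M"
      using less.prems unfolding PQ by (simp add: algebra_simps)
    moreover have "(\<lambda>x. y x - z0) \<in> polys" "(\<lambda>x. poly Q (y x)) \<in> polys"
      using y by (auto intro: polyfun_diff pf_const polyfun_poly)
    ultimately show ?thesis using maximal_poly_ideal_prime[OF M] less.hyps[OF dQ Q0] by blast
  qed
qed

lemma maximal_poly_ideal_coord_residue:
  assumes M: "maximal_poly_ideal M"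
  shows "\<exists>c. (\<lambda>x. coord x v - c) \<in> M"
proof (rule ccontr)
  assume no_residue: "\<nexists>c. (\<lambda>x. coord x v - c) \<in> M"
  have M_ideal: "poly_ideal M" using M by (simp add: maximal_poly_ideal_def)
  have "\<forall>c. \<exists>u m. u \<in> polys \<and> m \<in> M \<and> (\<forall>x. m x + u x * (coord x v - c) = 1)"
  proof
    fix c
    have "(\<lambda>x. coord x v - c) \<notin> M" using no_residue by blast
    with maximal_poly_ideal_inverse[OF M polyfun_diff[OF coord_in_polys pf_const[of c]]]
    show "\<exists>u m. u \<in> polys \<and> m \<in> M \<and> (\<forall>x. m x + u x * (coord x v - c) = 1)" by blast
  qed
  from choice[OF this] obtain u
    where "\<forall>c. \<exists>m. u c \<in> polys \<and> m \<in> M \<and> (\<forall>x. m x + u c x * (coord x v - c) = 1)"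
    by blast
  from choice[OF this] obtain m where um: "\<And>c. u c \<in> polys" "\<And>c. m c \<in> M"
    "\<And>c x. m c x + u c x * (coord x v - c) = 1"
    by blast
  from polys_uncountable_family_dependent[of u, OF um(1)] obtain T l
    where T: "finite T" "\<exists>c\<in>T. l c \<noteq> 0" and Tl: "\<And>x. (\<Sum>c\<in>T. l c * u c x) = 0"
    by blast
  define P where "P = (\<Sum>c\<in>T. smult (l c) (\<Prod>c'\<in>T - {c}. [:- c', 1:]))"
  have "P \<noteq> 0" unfolding P_def using T(2) lagrange_combination_nonzero[OF T(1)] by blast
  \<comment> \<open>multiply the \<open>c\<close>-th summand of \<open>P\<close> by \<open>1 = m c + u c (v - c)\<close>; the \<open>u\<close>-parts cancel\<close>
  moreover have "(\<lambda>x. poly P (coord x v))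
      = (\<lambda>x. \<Sum>c\<in>T. (l c * (\<Prod>c'\<in>T - {c}. coord x v - c')) * m c x)"
    unfolding P_def using poly_lagrange_combination[OF T(1) um(3)] Tl by simp
  moreover have "(\<lambda>x. \<Sum>c\<in>T. (l c * (\<Prod>c'\<in>T - {c}. coord x v - c')) * m c x) \<in> M"
  proof -
    have "(\<lambda>x. coord x v - c') \<in> polys" for c'
      by (rule polyfun_diff[OF coord_in_polys pf_const])
    then have "(\<lambda>x. l c * (\<Prod>c'\<in>T - {c}. coord x v - c')) \<in> polys" for c
      using T(1) by (intro polyfun_cmult polyfun_prod) auto
    then show ?thesis
      by (intro poly_ideal_sum[OF M_ideal T(1)] poly_ideal_mult[OF M_ideal um(2)])
  qed
  ultimately show False
    using maximal_poly_ideal_linear_factor[OF M coord_in_polys] no_residue by auto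
qed

lemma maximal_poly_ideal_common_zero:
  assumes M: "maximal_poly_ideal M"
  shows "\<exists>p. \<forall>f\<in>M. f p = 0"
proof -
  have M_ideal: "poly_ideal M" using M by (simp add: maximal_poly_ideal_def)
  obtain c where c: "\<And>v. (\<lambda>x. coord x v - c v) \<in> M"
    using maximal_poly_ideal_coord_residue[OF M] by metis
  obtain p where p: "coord p = c" using surj_coord by (metis surjD)
  \<comment> \<open>\<open>f - f(p)\<close> lies in the ideal generated by the \<open>coord v - c v\<close>\<close>
  have residue: "(\<lambda>x. f x - f p) \<in> M" if "f \<in> polys" for f
    using that
  proof (induction rule: polyfun.induct)
    case (pf_const a) then show ?case using poly_ideal_zero[OF M_ideal] by simp
  next
    case (pf_coord f) then show ?case using c p by auto
  next
    case (pf_add f g)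
    have "(\<lambda>x. (f x - f p) + (g x - g p)) \<in> M" using pf_add M_ideal by (intro poly_ideal_add) auto
    then show ?case by (simp add: algebra_simps)
  next
    case (pf_mult f g)
    have "(\<lambda>x. g x * (f x - f p) + (\<lambda>_. f p) x * (g x - g p)) \<in> M"
      using pf_mult M_ideal by (intro poly_ideal_add poly_ideal_mult pf_const) auto
    then show ?case by (simp add: algebra_simps)
  qed
  have "f p = 0" if "f \<in> M" for f
  proof -
    have "(\<lambda>x. f x - (f x - f p)) \<in> M"
      using poly_ideal_diff[OF M_ideal that residue[OF poly_ideal_subset[OF M_ideal that]]] .
    then have "(\<lambda>_. f p) \<in> M" by simp
    then show ?thesis using maximal_poly_ideal_const[OF M, of "f p"] by blast
  qed
  then show ?thesis by blast
qed

theorem weak_nullstellensatz: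
  assumes J: "finite J" and g: "\<And>j. j \<in> J \<Longrightarrow> g j \<in> polys"
    and no_common_zero: "\<And>x. \<exists>j\<in>J. g j x \<noteq> 0"
  shows "\<exists>q. (\<forall>j\<in>J. q j \<in> polys) \<and> (\<forall>x. (\<Sum>j\<in>J. q j x * g j x) = 1)"
proof (rule ccontr)
  define I where "I = {f. \<exists>q. (\<forall>j\<in>J. q j \<in> polys) \<and> f = (\<lambda>x. \<Sum>j\<in>J. q j x * g j x)}"
  assume no_certificate: "\<not> ?thesis"
  have "(\<lambda>_. 1) \<notin> I"
  proof
    assume "(\<lambda>_. 1) \<in> I"
    then obtain q where q: "\<forall>j\<in>J. q j \<in> polys" "(\<lambda>_. 1) = (\<lambda>x. \<Sum>j\<in>J. q j x * g j x)"
      unfolding I_def by blast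
    from q(2) have "\<forall>x. (\<Sum>j\<in>J. q j x * g j x) = 1" by (metis fun_cong)
    with q(1) no_certificate show False by blast
  qed
  then obtain M where M: "maximal_poly_ideal M" "I \<subseteq> M"
    using exists_maximal_poly_ideal[OF poly_ideal_generated[of J g, OF J g]]
    unfolding I_def by blast
  obtain p where p: "\<forall>f\<in>M. f p = 0" using maximal_poly_ideal_common_zero[OF M(1)] by blast
  have "g j \<in> I" if "j \<in> J" for j
  proof -
    have "(\<Sum>i\<in>J. (if i = j then 1 else 0) * g i x) = (\<Sum>i\<in>J. if i = j then g i x else 0)" for x
      by (rule sum.cong) auto
    then have "g j = (\<lambda>x. \<Sum>i\<in>J. (if i = j then 1 else 0) * g i x)"
      using that J by simp
    then show ?thesis unfolding I_def by (intro CollectI exI[of _ "\<lambda>i _. if i = j then 1 else 0"])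
        (auto intro: pf_const)
  qed
  then show False using no_common_zero[of p] p M(2) by blast
qed

end

section \<open>Weighted homogeneity of the defining equations\<close>

type_synonym point = "(nat \<Rightarrow> complex) \<times> (nat \<Rightarrow> nat \<Rightarrow> complex)"

definition point_coord :: "point \<Rightarrow> nat + nat \<times> nat \<Rightarrow> complex" where
  "point_coord x v = (case v of Inl i \<Rightarrow> fst x i | Inr (k, m) \<Rightarrow> snd x k m)"

lemma point_coord_simps [simp]:
  "point_coord x (Inl i) = fst x i" "point_coord x (Inr (k, m)) = snd x k m"
  by (simp_all add: point_coord_def)

lemma range_point_coord: "range (\<lambda>v x. point_coord x v) = total_coords"
proof
  show "range (\<lambda>v x. point_coord x v) \<subseteq> total_coords"
  proof (rule image_subsetI)
    fix v :: "nat + nat \<times> nat"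
    show "(\<lambda>x. point_coord x v) \<in> total_coords"
      unfolding total_coords_def by (cases v) (auto, blast)
  qed
  show "total_coords \<subseteq> range (\<lambda>v x. point_coord x v)"
  proof
    fix f assume "f \<in> total_coords"
    then consider i where "f = (\<lambda>x. fst x i)" | k m where "f = (\<lambda>x. snd x k m)"
      unfolding total_coords_def by blast
    then show "f \<in> range (\<lambda>v x. point_coord x v)"
      by cases (auto intro: image_eqI[of _ _ "Inl _"] image_eqI[of _ _ "Inr (_, _)"])
  qed
qed

lemma surj_point_coord: "surj point_coord"
proof (rule surjI)
  fix \<phi> :: "nat + nat \<times> nat \<Rightarrow> complex"
  show "point_coord (\<lambda>i. \<phi> (Inl i), \<lambda>k m. \<phi> (Inr (k, m))) = \<phi>"
    by (auto simp: fun_eq_iff point_coord_def split: sum.splits)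
qed

interpretation coordinate_space point_coord
  rewrites "range (\<lambda>v x. point_coord x v) = total_coords"
  by (unfold_locales) (rule surj_point_coord, rule range_point_coord)

lemma fst_coord_in_polys: "(\<lambda>x. fst x i) \<in> polyfun total_coords"
  using coord_in_polys[of "Inl i"] by simp

lemma snd_coord_in_polys: "(\<lambda>x. snd x k m) \<in> polyfun total_coords"
  using coord_in_polys[of "Inr (k, m)"] by simp

definition weighted_scale :: "nat \<Rightarrow> complex \<Rightarrow> point \<Rightarrow> point" where
  "weighted_scale d t x = (\<lambda>i. t ^ (d - i) * fst x i, \<lambda>k m. t * snd x k m)"

definition coord_weight :: "nat \<Rightarrow> nat + nat \<times> nat \<Rightarrow> nat" where
  "coord_weight d v = (case v of Inl i \<Rightarrow> d - i | Inr _ \<Rightarrow> 1)"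

definition monomial_weight :: "nat \<Rightarrow> (nat + nat \<times> nat) list \<Rightarrow> nat" where
  "monomial_weight d L = sum_list (map (coord_weight d) L)"

lemma monomial_weighted_scale:
  "monomial L (weighted_scale d t x) = t ^ monomial_weight d L * monomial L x"
proof -
  have "point_coord (weighted_scale d t x) v = t ^ coord_weight d v * point_coord x v" for v
    by (cases v) (auto simp: weighted_scale_def coord_weight_def)
  then show ?thesis
    by (induction L) (auto simp: monomial_def monomial_weight_def power_add)
qed

definition weighted_homogeneous :: "nat \<Rightarrow> (point \<Rightarrow> complex poly) \<Rightarrow> nat \<Rightarrow> bool" where
  "weighted_homogeneous d P w \<longleftrightarrow> (\<forall>x j. w < j \<longrightarrow> coeff (P x) j = 0) \<and>
      (\<forall>t x j. coeff (P (weighted_scale d t x)) j = t ^ (w - j) * coeff (P x) j)"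

lemma weighted_homogeneousD:
  assumes "weighted_homogeneous d P w"
  shows "w < j \<Longrightarrow> coeff (P x) j = 0"
    and "coeff (P (weighted_scale d t x)) j = t ^ (w - j) * coeff (P x) j"
  using assms unfolding weighted_homogeneous_def by blast+

lemma weighted_homogeneous_diff:
  "weighted_homogeneous d P w \<Longrightarrow> weighted_homogeneous d Q w \<Longrightarrow>
    weighted_homogeneous d (\<lambda>x. P x - Q x) w"
  by (auto simp: weighted_homogeneous_def algebra_simps)

lemma weighted_homogeneous_sum:
  "finite S \<Longrightarrow> (\<And>i. i \<in> S \<Longrightarrow> weighted_homogeneous d (P i) w) \<Longrightarrow>
    weighted_homogeneous d (\<lambda>x. \<Sum>i\<in>S. P i x) w"
  by (induction S rule: finite_induct) (auto simp: weighted_homogeneous_def algebra_simps)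

lemma weighted_homogeneous_mult:
  assumes P: "weighted_homogeneous d P w1" and Q: "weighted_homogeneous d Q w2"
  shows "weighted_homogeneous d (\<lambda>x. P x * Q x) (w1 + w2)"
  unfolding weighted_homogeneous_def
proof (intro conjI allI impI)
  fix x j assume j: "w1 + w2 < j"
  have "coeff (P x) i * coeff (Q x) (j - i) = 0" if "i \<le> j" for i
    using weighted_homogeneousD(1)[OF P, of i x] weighted_homogeneousD(1)[OF Q, of "j - i" x] j that
    by (cases "w1 < i") auto
  then show "coeff (P x * Q x) j = 0" unfolding coeff_mult by (intro sum.neutral) force
next
  fix t x j
  have "coeff (P (weighted_scale d t x)) i * coeff (Q (weighted_scale d t x)) (j - i)
      = t ^ (w1 + w2 - j) * (coeff (P x) i * coeff (Q x) (j - i))" if "i \<le> j" for i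
  proof (cases "i \<le> w1 \<and> j - i \<le> w2")
    case True
    then have "w1 - i + (w2 - (j - i)) = w1 + w2 - j" using that by linarith
    then have "t ^ (w1 - i) * t ^ (w2 - (j - i)) = t ^ (w1 + w2 - j)" by (metis power_add)
    then show ?thesis unfolding weighted_homogeneousD(2)[OF P] weighted_homogeneousD(2)[OF Q]
      by (simp add: algebra_simps)
  next
    case False
    then have "w1 < i \<or> w2 < j - i" by linarith
    then show ?thesis
      using weighted_homogeneousD(1)[OF P, of i] weighted_homogeneousD(1)[OF Q, of "j - i"]
      by (metis mult_zero_left mult_zero_right)
  qed
  then show "coeff (P (weighted_scale d t x) * Q (weighted_scale d t x)) j
      = t ^ (w1 + w2 - j) * coeff (P x * Q x) j"
    by (simp add: coeff_mult sum_distrib_left)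
qed

lemma weighted_homogeneous_prod:
  "finite S \<Longrightarrow> (\<And>i. i \<in> S \<Longrightarrow> weighted_homogeneous d (P i) (w i)) \<Longrightarrow>
    weighted_homogeneous d (\<lambda>x. \<Prod>i\<in>S. P i x) (\<Sum>i\<in>S. w i)"
proof (induction S rule: finite_induct)
  case empty then show ?case by (auto simp: weighted_homogeneous_def coeff_1)
next
  case (insert a F)
  then show ?case using weighted_homogeneous_mult[of d "P a" "w a"] by simp
qed

lemma weighted_homogeneous_smult:
  assumes P: "weighted_homogeneous d P w" and c: "\<And>t x. c (weighted_scale d t x) = t * c x"
  shows "weighted_homogeneous d (\<lambda>x. smult (c x) (P x)) (Suc w)"
  unfolding weighted_homogeneous_def
proof (intro conjI allI impI)
  fix x j assume "Suc w < j"
  then show "coeff (smult (c x) (P x)) j = 0" using weighted_homogeneousD(1)[OF P] by simp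
next
  fix t x j
  show "coeff (smult (c (weighted_scale d t x)) (P (weighted_scale d t x))) j
      = t ^ (Suc w - j) * coeff (smult (c x) (P x)) j"
    using weighted_homogeneousD[OF P] c by (cases "j \<le> w") (auto simp: Suc_diff_le)
qed

lemma weighted_homogeneous_linear_factor:
  "weighted_homogeneous d (\<lambda>x. [:- snd x k m, 1:]) 1"
  unfolding weighted_homogeneous_def
  by (auto simp: weighted_scale_def coeff_pCons split: nat.split)

lemma coeff_monic_poly:
  "coeff (monic_poly d a) j = (if j = d then 1 else if j < d then a j else 0)"
  unfolding monic_poly_def by (auto simp: coeff_sum coeff_monom)

definition polyfun_coeffs :: "(point \<Rightarrow> complex poly) \<Rightarrow> bool" where
  "polyfun_coeffs P \<longleftrightarrow> (\<forall>j. (\<lambda>x. coeff (P x) j) \<in> polyfun total_coords)"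

lemma polyfun_coeffs_diff: "polyfun_coeffs P \<Longrightarrow> polyfun_coeffs Q \<Longrightarrow> polyfun_coeffs (\<lambda>x. P x - Q x)"
  unfolding polyfun_coeffs_def by (simp add: polyfun_diff)

lemma polyfun_coeffs_sum:
  "finite S \<Longrightarrow> (\<And>i. i \<in> S \<Longrightarrow> polyfun_coeffs (P i)) \<Longrightarrow> polyfun_coeffs (\<lambda>x. \<Sum>i\<in>S. P i x)"
  unfolding polyfun_coeffs_def coeff_sum by (simp add: polyfun_sum)

lemma polyfun_coeffs_mult: "polyfun_coeffs P \<Longrightarrow> polyfun_coeffs Q \<Longrightarrow> polyfun_coeffs (\<lambda>x. P x * Q x)"
  unfolding polyfun_coeffs_def coeff_mult by (simp add: polyfun_sum pf_mult)

lemma polyfun_coeffs_prod: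
  "finite S \<Longrightarrow> (\<And>i. i \<in> S \<Longrightarrow> polyfun_coeffs (P i)) \<Longrightarrow> polyfun_coeffs (\<lambda>x. \<Prod>i\<in>S. P i x)"
proof (induction S rule: finite_induct)
  case empty
  show ?case unfolding polyfun_coeffs_def by (simp add: pf_const)
next
  case (insert a F)
  then show ?case using polyfun_coeffs_mult[of "P a"] by simp
qed

lemma polyfun_coeffs_smult:
  "polyfun_coeffs P \<Longrightarrow> c \<in> polyfun total_coords \<Longrightarrow> polyfun_coeffs (\<lambda>x. smult (c x) (P x))"
  unfolding polyfun_coeffs_def by (simp add: pf_mult)

lemma polyfun_coeffs_linear_factor: "polyfun_coeffs (\<lambda>x. [:- snd x k m, 1:])"
  unfolding polyfun_coeffs_def
proof
  fix j :: nat
  show "(\<lambda>x. coeff [:- snd x k m, 1:] j) \<in> polyfun total_coords"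
  proof (cases j)
    case 0
    then show ?thesis using polyfun_cmult[OF snd_coord_in_polys, of "-1"] by simp
  next
    case (Suc j') then show ?thesis by (cases j') (auto intro: pf_const)
  qed
qed

lemma polyfun_coeffs_monic_poly: "polyfun_coeffs (\<lambda>x. monic_poly d (fst x))"
  unfolding polyfun_coeffs_def coeff_monic_poly
proof
  fix j
  show "(\<lambda>x. if j = d then 1 else if j < d then fst x j else 0) \<in> polyfun total_coords"
    by (cases "j = d"; cases "j < d") (simp_all add: pf_const fst_coord_in_polys)
qed

definition cycle_defect :: "nat \<Rightarrow> nat \<Rightarrow> nat \<Rightarrow> point \<Rightarrow> complex poly" where
  "cycle_defect d n k x = (\<Sum>m<d. smult (snd x ((k + 1) mod n) m - snd x k m)
                         (\<Prod>j\<in>{..<d} - {m}. [:- snd x k j, 1:]))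
            - ((\<Prod>m<d. [:- snd x k m, 1:]) - monic_poly d (fst x))"

lemma mem_Pd_n_iff:
  "x \<in> Pd_n d n \<longleftrightarrow> (\<forall>i\<ge>d. fst x i = 0) \<and> (\<forall>k m. n \<le> k \<or> d \<le> m \<longrightarrow> snd x k m = 0)
     \<and> (\<forall>k<n. cycle_defect d n k x = 0)"
  by (cases x) (simp add: Pd_n_def cycle_defect_def)

lemma weighted_homogeneous_cycle_defect:
  assumes "d \<ge> 1"
  shows "weighted_homogeneous d (cycle_defect d n k) d"
proof -
  have "weighted_homogeneous d (\<lambda>x. smult (snd x ((k + 1) mod n) m - snd x k m)
      (\<Prod>j\<in>{..<d} - {m}. [:- snd x k j, 1:])) d" if "m < d" for m
  proof -
    have "weighted_homogeneous d (\<lambda>x. smult (snd x ((k + 1) mod n) m - snd x k m)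
        (\<Prod>j\<in>{..<d} - {m}. [:- snd x k j, 1:])) (Suc (\<Sum>j\<in>{..<d} - {m}. 1))"
      by (intro weighted_homogeneous_smult weighted_homogeneous_prod
          weighted_homogeneous_linear_factor)
         (auto simp: weighted_scale_def algebra_simps)
    moreover have "Suc (\<Sum>j\<in>{..<d} - {m}. 1) = d" using that assms by simp
    ultimately show ?thesis by simp
  qed
  moreover have "weighted_homogeneous d (\<lambda>x. \<Prod>m<d. [:- snd x k m, 1:]) d"
    using weighted_homogeneous_prod[of "{..<d}" d "\<lambda>m x. [:- snd x k m, 1:]" "\<lambda>_. 1"]
      weighted_homogeneous_linear_factor by simp
  moreover have "weighted_homogeneous d (\<lambda>x. monic_poly d (fst x)) d"
    by (auto simp: weighted_homogeneous_def coeff_monic_poly weighted_scale_def)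
  ultimately show ?thesis unfolding cycle_defect_def[abs_def]
    by (intro weighted_homogeneous_diff weighted_homogeneous_sum) auto
qed

lemma polyfun_coeffs_cycle_defect: "polyfun_coeffs (cycle_defect d n k)"
proof -
  have "(\<lambda>x. snd x ((k + 1) mod n) m - snd x k m) \<in> polyfun total_coords" for m
    by (intro polyfun_diff snd_coord_in_polys)
  then show ?thesis unfolding cycle_defect_def[abs_def]
    by (intro polyfun_coeffs_diff polyfun_coeffs_sum polyfun_coeffs_smult polyfun_coeffs_prod
        polyfun_coeffs_linear_factor polyfun_coeffs_monic_poly) auto
qed

lemma cycle_defect_weighted_scale:
  "d \<ge> 1 \<Longrightarrow> coeff (cycle_defect d n k (weighted_scale d t x)) j
     = t ^ (d - j) * coeff (cycle_defect d n k x) j"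
  using weighted_homogeneousD(2)[OF weighted_homogeneous_cycle_defect] .

lemma cycle_defect_eq_0_iff:
  "d \<ge> 1 \<Longrightarrow> cycle_defect d n k x = 0 \<longleftrightarrow> (\<forall>j\<le>d. coeff (cycle_defect d n k x) j = 0)"
  using weighted_homogeneousD(1)[OF weighted_homogeneous_cycle_defect]
  by (metis leI poly_eq_iff coeff_0)

lemma weighted_scale_mem_Pd_n:
  assumes "d \<ge> 1" "x \<in> Pd_n d n"
  shows "weighted_scale d t x \<in> Pd_n d n"
  using assms cycle_defect_weighted_scale[OF assms(1)]
  by (auto simp: mem_Pd_n_iff poly_eq_iff) (auto simp: weighted_scale_def)

lemma zero_mem_Pd0_n: "(\<lambda>k m. 0) \<in> Pd0_n d n"
proof -
  have "cycle_defect d n k ((\<lambda>_. 0), (\<lambda>k m. 0)) = 0" for k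
    unfolding cycle_defect_def monic_poly_def by (simp add: monom_altdef)
  then show ?thesis unfolding Pd0_n_def mem_Pd_n_iff by simp
qed

section \<open>Finiteness forces a trivial central fiber\<close>

lemma finite_projection_fiber_relation:
  assumes fp: "finite_projection V" and f: "f \<in> polyfun total_coords"
  shows "\<exists>K l. (\<exists>j\<le>K. l j \<noteq> (0::complex)) \<and> (\<forall>x\<in>V. fst x = a \<longrightarrow> (\<Sum>j\<le>K. l j * f x ^ j) = 0)"
proof -
  obtain G where G: "finite G"
    "\<And>f. f \<in> polyfun total_coords \<Longrightarrow> \<exists>h. (\<forall>g\<in>G. h g \<in> polyfun base_coords) \<and>
        (\<forall>x\<in>V. f x = (\<Sum>g\<in>G. h g (fst x) * g x))"
    using fp unfolding finite_projection_def by blast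
  have "\<forall>j. \<exists>h. \<forall>x\<in>V. f x ^ j = (\<Sum>g\<in>G. h g (fst x) * g x)"
  proof
    fix j
    show "\<exists>h. \<forall>x\<in>V. f x ^ j = (\<Sum>g\<in>G. h g (fst x) * g x)"
      using G(2)[OF polyfun_power[OF f, of j]] by blast
  qed
  from choice[OF this] obtain h where h: "\<And>j x. x \<in> V \<Longrightarrow> f x ^ j = (\<Sum>g\<in>G. h j g (fst x) * g x)"
    by blast
  obtain l where l: "\<exists>j\<in>{..card G}. l j \<noteq> 0" "\<forall>g\<in>G. (\<Sum>j\<le>card G. l j * h j g a) = 0"
    using nontrivial_relation_if_card_less[of G "{..card G}" "\<lambda>j g. h j g a"] G(1) by auto
  have "(\<Sum>j\<le>card G. l j * f x ^ j) = 0" if "x \<in> V" "fst x = a" for x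
  proof -
    have "(\<Sum>j\<le>card G. l j * f x ^ j) = (\<Sum>g\<in>G. (\<Sum>j\<le>card G. l j * h j g a) * g x)"
      using that by (simp add: h sum_distrib_left sum_distrib_right mult.assoc sum.swap[of _ G])
    then show ?thesis using l(2) by simp
  qed
  then show ?thesis using l(1) by blast
qed

lemma Pd0_n_trivial_if_finite_projection:
  assumes d: "d \<ge> 1" and fp: "finite_projection (Pd_n d n)"
  shows "Pd0_n d n = {\<lambda>k m. 0}"
proof -
  have "z = (\<lambda>k m. 0)" if z: "z \<in> Pd0_n d n" for z
  proof (rule ccontr)
    assume "z \<noteq> (\<lambda>k m. 0)"
    then obtain k0 m0 where c: "z k0 m0 \<noteq> 0" by (meson ext)
    obtain K l where l: "\<exists>j\<le>K. l j \<noteq> 0"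
      "\<And>x. x \<in> Pd_n d n \<Longrightarrow> fst x = (\<lambda>_. 0) \<Longrightarrow> (\<Sum>j\<le>K. l j * snd x k0 m0 ^ j) = 0"
      using finite_projection_fiber_relation[OF fp snd_coord_in_polys[of k0 m0], of "\<lambda>_. 0"]
      by blast
    \<comment> \<open>the fiber over \<open>Z\<^sup>d\<close> is stable under \<open>z \<mapsto> t z\<close>\<close>
    define P where "P = (\<Sum>j\<le>K. monom (l j * z k0 m0 ^ j) j)"
    have "poly P t = 0" for t
    proof -
      have "weighted_scale d t ((\<lambda>_. 0), z) \<in> Pd_n d n"
        using weighted_scale_mem_Pd_n[OF d] z unfolding Pd0_n_def by simp
      then show ?thesis using l(2)[of "weighted_scale d t ((\<lambda>_. 0), z)"]
        by (simp add: P_def poly_sum poly_monom weighted_scale_def power_mult_distrib algebra_simps)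
    qed
    then have "P = 0" using poly_all_0_iff_0 by blast
    obtain j where j: "j \<le> K" "l j \<noteq> 0" using l(1) by blast
    then have "coeff P j = l j * z k0 m0 ^ j" unfolding P_def by (simp add: coeff_sum coeff_monom)
    then show False using \<open>P = 0\<close> j(2) c by simp
  qed
  then show ?thesis using zero_mem_Pd0_n by blast
qed

section \<open>A trivial central fiber forces finiteness\<close>

datatype generator_index = Defect_coeff nat nat | Base_coeff nat | Chart

fun generator :: "nat \<Rightarrow> nat \<Rightarrow> nat + nat \<times> nat \<Rightarrow> generator_index \<Rightarrow> point \<Rightarrow> complex" where
  "generator d n y (Defect_coeff k j) = (\<lambda>x. coeff (cycle_defect d n k x) j)"
| "generator d n y (Base_coeff i) = (\<lambda>x. fst x i)"
| "generator d n y Chart = (\<lambda>x. point_coord x y - 1)"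

fun generator_weight :: "nat \<Rightarrow> generator_index \<Rightarrow> nat" where
  "generator_weight d (Defect_coeff k j) = d - j"
| "generator_weight d (Base_coeff i) = d - i"
| "generator_weight d Chart = 0"

definition affine_generators :: "nat \<Rightarrow> nat \<Rightarrow> generator_index set" where
  "affine_generators d n = (\<lambda>(k, j). Defect_coeff k j) ` ({..<n} \<times> {..d}) \<union> Base_coeff ` {..<d}"

lemma finite_affine_generators: "finite (affine_generators d n)"
  by (simp add: affine_generators_def)

lemma Chart_notin_affine_generators: "Chart \<notin> affine_generators d n"
  by (auto simp: affine_generators_def)

lemma generator_in_polys: "generator d n y g \<in> polyfun total_coords"
  using polyfun_coeffs_cycle_defect fst_coord_in_polys polyfun_diff[OF coord_in_polys pf_const]
  by (cases g) (auto simp: polyfun_coeffs_def)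

lemma generator_weighted_scale:
  "d \<ge> 1 \<Longrightarrow> g \<noteq> Chart \<Longrightarrow>
    generator d n y g (weighted_scale d t x) = t ^ generator_weight d g * generator d n y g x"
  by (cases g) (simp_all add: cycle_defect_weighted_scale, simp add: weighted_scale_def)

definition truncate :: "nat \<Rightarrow> nat \<Rightarrow> point \<Rightarrow> point" where
  "truncate d n x = ((\<lambda>i. if i < d then fst x i else 0),
     (\<lambda>k m. if k < n \<and> m < d then snd x k m else 0))"

lemma cycle_defect_truncate:
  assumes "n \<ge> 1" "k < n"
  shows "cycle_defect d n k (truncate d n x) = cycle_defect d n k x"
proof -
  have "(k + 1) mod n < n" using assms by simp
  then have "snd (truncate d n x) k' m = snd x k' m" if "k' \<in> {k, (k + 1) mod n}" "m < d" for k' m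
    using that assms by (auto simp: truncate_def)
  moreover have "fst (truncate d n x) i = fst x i" if "i < d" for i
    using that by (simp add: truncate_def)
  ultimately show ?thesis unfolding cycle_defect_def monic_poly_def
    by (intro arg_cong2[where f = minus] sum.cong prod.cong arg_cong2[where f = smult]
        arg_cong[where f = "\<lambda>s. monom 1 d + s"] refl) auto
qed

text \<open>A common zero of the affine generators with \<open>z = 1\<close> would, after truncation, be a
  nonzero point of the fiber over \<open>Z\<^sup>d\<close>.\<close>
lemma generators_no_common_zero:
  assumes d: "d \<ge> 1" and n: "n \<ge> 1" and fiber: "Pd0_n d n = {\<lambda>k m. 0}"
    and y: "y = Inr (k0, m0)" "k0 < n" "m0 < d"
  shows "\<exists>g\<in>insert Chart (affine_generators d n). generator d n y g x \<noteq> 0"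
proof (rule ccontr)
  assume "\<not> ?thesis"
  then have zero: "\<And>g. g \<in> insert Chart (affine_generators d n) \<Longrightarrow> generator d n y g x = 0"
    by blast
  have "cycle_defect d n k (truncate d n x) = 0" if "k < n" for k
    using zero[of "Defect_coeff k _"] that cycle_defect_eq_0_iff[OF d]
      cycle_defect_truncate[OF n that]
    by (auto simp: affine_generators_def)
  moreover have "fst (truncate d n x) = (\<lambda>_. 0)"
    using zero[of "Base_coeff _"] by (auto simp: truncate_def affine_generators_def)
  ultimately have "((\<lambda>_. 0), snd (truncate d n x)) \<in> Pd_n d n"
    by (auto simp: mem_Pd_n_iff truncate_def)
  then have "snd (truncate d n x) \<in> Pd0_n d n" unfolding Pd0_n_def by simp
  then have "snd (truncate d n x) k0 m0 = 0" using fiber by simp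
  moreover have "snd (truncate d n x) k0 m0 = 1" using zero[of Chart] y by (simp add: truncate_def)
  ultimately show False by simp
qed

definition homogenize ::
    "nat \<Rightarrow> nat + nat \<times> nat \<Rightarrow> nat \<Rightarrow> nat \<Rightarrow> (complex \<times> _ list) list \<Rightarrow> (complex \<times> _ list) list" where
  "homogenize d y N w R =
     map (\<lambda>p. (fst p, snd p @ replicate (N - monomial_weight d (snd p) - w) y)) R"

lemma monomial_weight_homogenize:
  assumes "y = Inr km" "p \<in> set (homogenize d y N w R)"
    and "\<forall>p\<in>set R. monomial_weight d (snd p) + w \<le> N"
  shows "monomial_weight d (snd p) + w = N"
  using assms by (auto simp: homogenize_def monomial_weight_def coord_weight_def sum_list_replicate)

lemma lincomb_homogenize:
  assumes y: "y = Inr km" and st: "point_coord x y * t = 1"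
    and R: "\<forall>p\<in>set R. monomial_weight d (snd p) + w \<le> N"
  shows "point_coord x y ^ N * (lincomb R (weighted_scale d t x) * t ^ w)
    = lincomb (homogenize d y N w R) x"
  using R
proof (induction R)
  case Nil then show ?case by (simp add: lincomb_def homogenize_def)
next
  case (Cons p R)
  define e where "e = N - monomial_weight d (snd p) - w"
  have N: "N = e + (monomial_weight d (snd p) + w)" using Cons.prems by (simp add: e_def)
  have "point_coord x y ^ N * (t ^ monomial_weight d (snd p) * t ^ w)
      = point_coord x y ^ e * (point_coord x y * t) ^ (monomial_weight d (snd p) + w)"
    unfolding N by (simp add: power_add power_mult_distrib algebra_simps)
  also have "\<dots> = point_coord x y ^ e" using st by simp
  finally have "point_coord x y ^ N * (fst p * monomial (snd p) (weighted_scale d t x) * t ^ w)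
      = fst p * monomial (snd p @ replicate e y) x"
    by (simp add: monomial_weighted_scale monomial_append monomial_replicate algebra_simps)
  with Cons show ?case by (simp add: lincomb_def homogenize_def e_def algebra_simps)
qed

lemma generator_weight_le: "generator_weight d g \<le> d"
  by (cases g) auto

text \<open>Off \<open>y = 0\<close> the identity follows by rescaling to the chart \<open>y = 1\<close>; being polynomial,
  it then holds everywhere.\<close>
lemma homogenize_chart_identity:
  assumes d: "d \<ge> 1" and y: "y = Inr km" and J: "finite J" "Chart \<notin> J"
    and chart: "\<And>x. point_coord x y = 1 \<Longrightarrow> (\<Sum>g\<in>J. lincomb (R g) x * generator d n y g x) = 1"
    and bound: "\<forall>g\<in>J. \<forall>p\<in>set (R g). monomial_weight d (snd p) + generator_weight d g \<le> N"
  shows "point_coord x y ^ N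
    = (\<Sum>g\<in>J. lincomb (homogenize d y N (generator_weight d g) (R g)) x * generator d n y g x)"
    (is "_ = ?rhs x")
proof -
  let ?y = "\<lambda>x. point_coord x y"
  have "(\<lambda>x. ?y x ^ N - ?rhs x) \<in> polyfun total_coords"
    by (intro polyfun_diff polyfun_power coord_in_polys polyfun_sum pf_mult lincomb_in_polys
        generator_in_polys J)
  moreover have "?y x ^ N - ?rhs x = 0" if "?y x \<noteq> 0" for x
  proof -
    define t where "t = 1 / ?y x"
    have st: "?y x * t = 1" using that by (simp add: t_def)
    have "?y (weighted_scale d t x) = 1"
      using st y by (cases km) (simp add: weighted_scale_def mult.commute)
    then have "1 = (\<Sum>g\<in>J. lincomb (R g) (weighted_scale d t x)
        * generator d n y g (weighted_scale d t x))"
      by (rule chart[symmetric])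
    also have "\<dots> = (\<Sum>g\<in>J. lincomb (R g) (weighted_scale d t x) * t ^ generator_weight d g
        * generator d n y g x)"
    proof (rule sum.cong[OF refl])
      fix g assume "g \<in> J"
      then have "g \<noteq> Chart" using J(2) by blast
      then show "lincomb (R g) (weighted_scale d t x) * generator d n y g (weighted_scale d t x)
          = lincomb (R g) (weighted_scale d t x) * t ^ generator_weight d g * generator d n y g x"
        using generator_weighted_scale[OF d, of g n y t x] by simp
    qed
    finally have "?y x ^ N * 1 = ?y x ^ N * (\<Sum>g\<in>J. lincomb (R g) (weighted_scale d t x)
        * t ^ generator_weight d g * generator d n y g x)"
      by (rule arg_cong)
    then have "?y x ^ N = (\<Sum>g\<in>J. ?y x ^ N * (lincomb (R g) (weighted_scale d t x)
        * t ^ generator_weight d g) * generator d n y g x)"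
      by (simp add: sum_distrib_left mult.assoc)
    also have "\<dots> = ?rhs x"
      using lincomb_homogenize[OF y st] bound by (intro sum.cong) auto
    finally show ?thesis by simp
  qed
  ultimately have "?y x ^ N - ?rhs x = 0" by (rule polys_vanish_if_vanish_off_hyperplane)
  then show ?thesis by simp
qed

lemma homogeneous_certificate:
  assumes d: "d \<ge> 1" and n: "n \<ge> 1" and fiber: "Pd0_n d n = {\<lambda>k m. 0}"
    and y: "y = Inr (k0, m0)" "k0 < n" "m0 < d"
  shows "\<exists>N R. (\<forall>x. point_coord x y ^ N
      = (\<Sum>g\<in>affine_generators d n. lincomb (R g) x * generator d n y g x)) \<and>
    (\<forall>g\<in>affine_generators d n. \<forall>p\<in>set (R g).
      monomial_weight d (snd p) + generator_weight d g = N)"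
proof -
  let ?J = "affine_generators d n"
  obtain q where q: "\<forall>g\<in>insert Chart ?J. q g \<in> polyfun total_coords"
    "\<And>x. (\<Sum>g\<in>insert Chart ?J. q g x * generator d n y g x) = 1"
    using weak_nullstellensatz[of "insert Chart ?J" "generator d n y", OF _ generator_in_polys
        generators_no_common_zero[OF assms]] finite_affine_generators by blast
  have "\<forall>g\<in>?J. \<exists>R. q g = lincomb R" using q(1) polys_eq_lincomb by blast
  from bchoice[OF this] obtain R0 where R0: "\<forall>g\<in>?J. q g = lincomb (R0 g)" ..
  have chart: "(\<Sum>g\<in>?J. lincomb (R0 g) x * generator d n y g x) = 1" if "point_coord x y = 1" for x
    using q(2)[of x] R0 that finite_affine_generators Chart_notin_affine_generators by simp
  define N where "N = (\<Sum>g\<in>?J. \<Sum>p\<leftarrow>R0 g. monomial_weight d (snd p)) + d"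
  have bound: "\<forall>g\<in>?J. \<forall>p\<in>set (R0 g). monomial_weight d (snd p) + generator_weight d g \<le> N"
  proof (intro ballI)
    fix g p assume g: "g \<in> ?J" and "p \<in> set (R0 g)"
    then have "monomial_weight d (snd p) \<le> (\<Sum>p\<leftarrow>R0 g. monomial_weight d (snd p))"
      by (intro member_le_sum_list) auto
    also have "\<dots> \<le> (\<Sum>g\<in>?J. \<Sum>p\<leftarrow>R0 g. monomial_weight d (snd p))"
      using g finite_affine_generators by (intro member_le_sum) auto
    finally show "monomial_weight d (snd p) + generator_weight d g \<le> N"
      using generator_weight_le[of d g] unfolding N_def by linarith
  qed
  show ?thesis
    using homogenize_chart_identity[OF d y(1) finite_affine_generators Chart_notin_affine_generators
        chart bound] monomial_weight_homogenize[OF y(1)] bound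
    by (intro exI[of _ N] exI[of _ "\<lambda>g. homogenize d y N (generator_weight d g) (R0 g)"]) blast
qed

definition in_base_span :: "(point \<Rightarrow> complex) set \<Rightarrow> point set \<Rightarrow> (point \<Rightarrow> complex) \<Rightarrow> bool" where
  "in_base_span G V f \<longleftrightarrow>
     (\<exists>h. (\<forall>g\<in>G. h g \<in> polyfun base_coords) \<and> (\<forall>x\<in>V. f x = (\<Sum>g\<in>G. h g (fst x) * g x)))"

lemma finite_projection_iff_in_base_span:
  "finite_projection V \<longleftrightarrow> (\<exists>G. finite G \<and> G \<subseteq> polyfun total_coords \<and>
     (\<forall>f\<in>polyfun total_coords. in_base_span G V f))"
  unfolding finite_projection_def in_base_span_def ..

lemma in_base_span_zero_on: "(\<And>x. x \<in> V \<Longrightarrow> f x = 0) \<Longrightarrow> in_base_span G V f"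
  unfolding in_base_span_def by (intro exI[of _ "\<lambda>_ _. 0"]) (simp add: pf_const)

lemma in_base_span_cong:
  assumes "in_base_span G V f" "\<And>x. x \<in> V \<Longrightarrow> f x = f' x"
  shows "in_base_span G V f'"
proof -
  obtain h where "\<forall>g\<in>G. h g \<in> polyfun base_coords" "\<forall>x\<in>V. f x = (\<Sum>g\<in>G. h g (fst x) * g x)"
    using assms(1) unfolding in_base_span_def by blast
  with assms(2) show ?thesis unfolding in_base_span_def by (intro exI[of _ h]) simp
qed

lemma in_base_span_add:
  assumes "in_base_span G V f" "in_base_span G V f'"
  shows "in_base_span G V (\<lambda>x. f x + f' x)"
proof -
  obtain h h' where h: "\<forall>g\<in>G. h g \<in> polyfun base_coords" "\<forall>x\<in>V. f x = (\<Sum>g\<in>G. h g (fst x) * g x)"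
    and h': "\<forall>g\<in>G. h' g \<in> polyfun base_coords" "\<forall>x\<in>V. f' x = (\<Sum>g\<in>G. h' g (fst x) * g x)"
    using assms unfolding in_base_span_def by blast
  show ?thesis unfolding in_base_span_def
    by (intro exI[of _ "\<lambda>g a. h g a + h' g a"])
       (use h h' in \<open>auto intro: pf_add simp: sum.distrib algebra_simps\<close>)
qed

lemma in_base_span_sum:
  "finite S \<Longrightarrow> (\<And>i. i \<in> S \<Longrightarrow> in_base_span G V (f i)) \<Longrightarrow> in_base_span G V (\<lambda>x. \<Sum>i\<in>S. f i x)"
  by (induction S rule: finite_induct) (simp_all add: in_base_span_zero_on in_base_span_add)

lemma in_base_span_sum_list:
  "(\<And>p. p \<in> set L \<Longrightarrow> in_base_span G V (f p)) \<Longrightarrow> in_base_span G V (\<lambda>x. \<Sum>p\<leftarrow>L. f p x)"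
  by (induction L) (simp_all add: in_base_span_zero_on in_base_span_add)

lemma in_base_span_base_mult:
  assumes "in_base_span G V f" "b \<in> polyfun base_coords"
  shows "in_base_span G V (\<lambda>x. b (fst x) * f x)"
proof -
  obtain h where h: "\<forall>g\<in>G. h g \<in> polyfun base_coords" "\<forall>x\<in>V. f x = (\<Sum>g\<in>G. h g (fst x) * g x)"
    using assms(1) unfolding in_base_span_def by blast
  show ?thesis unfolding in_base_span_def
    by (intro exI[of _ "\<lambda>g a. b a * h g a"])
       (use h assms(2) in \<open>auto intro: pf_mult simp: sum_distrib_left algebra_simps\<close>)
qed

lemma in_base_span_generator:
  assumes "finite G" "g0 \<in> G"
  shows "in_base_span G V g0"
proof -
  have "(\<Sum>g\<in>G. (if g = g0 then 1 else 0) * g x) = g0 x" for x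
    using assms by (simp add: if_distrib[of "\<lambda>c. c * _"] cong: if_cong)
  then show ?thesis unfolding in_base_span_def
    by (intro exI[of _ "\<lambda>g _. if g = g0 then 1 else 0"]) (auto intro: pf_const)
qed

lemma in_base_span_if_monomials:
  assumes span: "\<And>L. in_base_span G V (monomial L)" and f: "f \<in> polyfun total_coords"
  shows "in_base_span G V f"
proof -
  obtain S where S: "f = lincomb S" using polys_eq_lincomb[OF f] by blast
  have "in_base_span G V (\<lambda>x. (\<lambda>_. fst p) (fst x) * monomial (snd p) x)" for p
    by (intro in_base_span_base_mult span pf_const)
  then have "in_base_span G V (\<lambda>x. \<Sum>p\<leftarrow>S. fst p * monomial (snd p) x)"
    by (intro in_base_span_sum_list) simp
  then show ?thesis unfolding S lincomb_def .
qed

definition fiber_degree :: "(nat + nat \<times> nat) list \<Rightarrow> nat" where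
  "fiber_degree L = length (filter (\<lambda>v. \<not> isl v) L)"

lemma fiber_degree_le_monomial_weight: "fiber_degree L \<le> monomial_weight d L"
  by (induction L)
     (auto simp: fiber_degree_def monomial_weight_def coord_weight_def split: sum.splits)

definition base_monomial :: "(nat + nat \<times> nat) list \<Rightarrow> (nat \<Rightarrow> complex) \<Rightarrow> complex" where
  "base_monomial L a = (\<Prod>v\<leftarrow>filter isl L. a (projl v))"

lemma base_monomial_in_polys: "base_monomial L \<in> polyfun base_coords"
  unfolding base_monomial_def[abs_def]
  by (intro polyfun_prod_list pf_coord) (auto simp: base_coords_def)

lemma monomial_split_base:
  "monomial L x = base_monomial L (fst x) * monomial (filter (\<lambda>v. \<not> isl v) L) x"
proof (induction L)
  case Nil then show ?case by (simp add: monomial_def base_monomial_def)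
next
  case (Cons v L)
  then show ?case by (cases v) (auto simp: monomial_def base_monomial_def)
qed

lemma monomial_extract_power:
  "N \<le> count_list L y \<Longrightarrow>
    \<exists>L'. (\<forall>x. monomial L x = point_coord x y ^ N * monomial L' x) \<and> length L' + N = length L
      \<and> set L' \<subseteq> set L"
proof (induction N arbitrary: L)
  case 0 then show ?case by auto
next
  case (Suc N)
  then have y: "y \<in> set L" by (metis count_list_0_iff not_less_eq_eq zero_le)
  have "N \<le> count_list (remove1 y L) y"
    using Suc.prems by (induction L) auto
  then obtain L' where L': "\<forall>x. monomial (remove1 y L) x = point_coord x y ^ N * monomial L' x"
    "length L' + N = length (remove1 y L)" "set L' \<subseteq> set (remove1 y L)"
    using Suc.IH by blast
  have "monomial L x = point_coord x y * monomial (remove1 y L) x" for x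
    using y by (induction L) (auto simp: monomial_def)
  moreover have "length L' + Suc N = length L"
    using L'(2) y by (simp add: length_remove1) (metis Suc_pred length_pos_if_in_set)
  moreover have "set L' \<subseteq> set L" using L'(3) set_remove1_subset by fastforce
  ultimately show ?case using L'(1) by auto
qed

lemma pigeonhole_count_list:
  assumes "finite Z" "set L \<subseteq> Z" "(\<Sum>y\<in>Z. N y - 1) < length L"
  shows "\<exists>y\<in>Z. N y \<le> count_list L y"
proof (rule ccontr)
  assume "\<not> ?thesis"
  then have "(\<Sum>y\<in>Z. count_list L y) \<le> (\<Sum>y\<in>Z. N y - 1)"
    by (intro sum_mono) (auto simp: not_le)
  then show False using sum_count_set[OF assms(2,1)] assms(3) by simp
qed

definition fiber_coords :: "nat \<Rightarrow> nat \<Rightarrow> (nat + nat \<times> nat) set" where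
  "fiber_coords d n = (\<lambda>(k, m). Inr (k, m)) ` ({..<n} \<times> {..<d})"

lemma finite_fiber_coords: "finite (fiber_coords d n)"
  by (simp add: fiber_coords_def)

lemma monomial_vanishes_on_Pd_n:
  assumes "v \<in> set L" "\<not> isl v" "v \<notin> fiber_coords d n" "x \<in> Pd_n d n"
  shows "monomial L x = 0"
proof -
  obtain k m where v: "v = Inr (k, m)" using assms(2) by (cases v) auto
  then have "\<not> (k < n \<and> m < d)" using assms(3) by (auto simp: fiber_coords_def)
  then have "snd x k m = 0" using assms(4) by (auto simp: mem_Pd_n_iff)
  then show ?thesis using assms(1) v unfolding monomial_def
    by (metis point_coord_simps(2) prod_list_zero_iff image_eqI set_map)
qed

lemma sum_affine_generators_on_Pd_n:
  assumes "x \<in> Pd_n d n"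
  shows "(\<Sum>g\<in>affine_generators d n. F g * generator d n y g x) = (\<Sum>i<d. F (Base_coeff i) * fst x i)"
proof -
  have "(\<Sum>g\<in>affine_generators d n. F g * generator d n y g x)
      = (\<Sum>g\<in>Base_coeff ` {..<d}. F g * generator d n y g x)"
  proof (rule sum.mono_neutral_right[OF finite_affine_generators])
    show "Base_coeff ` {..<d} \<subseteq> affine_generators d n" by (auto simp: affine_generators_def)
    show "\<forall>g\<in>affine_generators d n - Base_coeff ` {..<d}. F g * generator d n y g x = 0"
      using assms by (auto simp: affine_generators_def mem_Pd_n_iff)
  qed
  also have "\<dots> = (\<Sum>i<d. F (Base_coeff i) * fst x i)"
    by (subst sum.reindex) (auto simp: inj_on_def)
  finally show ?thesis .
qed

text \<open>A monomial containing \<open>z\<^sup>N\<close> is rewritten with the homogeneous certificate for \<open>z\<^sup>N\<close>: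
  on the variety only the terms with some \<open>a\<^sub>i\<close> survive, and since \<open>a\<^sub>i\<close> has weight
  \<open>d - i \<ge> 1\<close>, their monomials have smaller degree in the fiber coordinates.\<close>
lemma in_base_span_long_monomial:
  assumes cert: "\<And>x. point_coord x y ^ N
      = (\<Sum>g\<in>affine_generators d n. lincomb (R g) x * generator d n y g x)"
    and weights: "\<forall>g\<in>affine_generators d n. \<forall>p\<in>set (R g).
      monomial_weight d (snd p) + generator_weight d g = N"
    and y: "\<not> isl y" and count: "N \<le> count_list L y"
    and IH: "\<And>L'. fiber_degree L' < fiber_degree L \<Longrightarrow> in_base_span G (Pd_n d n) (monomial L')"
  shows "in_base_span G (Pd_n d n) (monomial L)"
proof -
  let ?Lz = "filter (\<lambda>v. \<not> isl v) L"
  have "count_list ?Lz y = count_list L y" using y by (induction L) auto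
  then have "N \<le> count_list ?Lz y" using count by simp
  then obtain L' where L': "\<And>x. monomial ?Lz x = point_coord x y ^ N * monomial L' x"
    "length L' + N = length ?Lz" "set L' \<subseteq> set ?Lz"
    using monomial_extract_power by blast
  define b where "b c i a = c * a i * base_monomial L a" for c i a
  define T where "T i x = (\<Sum>p\<leftarrow>R (Base_coeff i). b (fst p) i (fst x) * monomial (snd p @ L') x)"
    for i x
  have monomial_eq: "monomial L x = (\<Sum>i<d. T i x)" if "x \<in> Pd_n d n" for x
  proof -
    have "monomial L x = base_monomial L (fst x) * monomial L' x * point_coord x y ^ N"
      using monomial_split_base[of L x] L'(1) by (simp add: algebra_simps)
    also have "\<dots> = (\<Sum>i<d. base_monomial L (fst x) * monomial L' x
        * lincomb (R (Base_coeff i)) x * fst x i)"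
      using sum_affine_generators_on_Pd_n[OF that] by (simp add: cert sum_distrib_left mult.assoc)
    also have "\<dots> = (\<Sum>i<d. T i x)"
      by (simp add: T_def b_def lincomb_def monomial_append sum_list_const_mult[symmetric]
          algebra_simps)
    finally show ?thesis .
  qed
  have T_span: "in_base_span G (Pd_n d n) (T i)" if "i < d" for i
    unfolding T_def
  proof (intro in_base_span_sum_list in_base_span_base_mult)
    fix p assume p: "p \<in> set (R (Base_coeff i))"
    show "b (fst p) i \<in> polyfun base_coords" unfolding b_def[abs_def]
      by (intro pf_mult polyfun_cmult base_monomial_in_polys pf_coord) (auto simp: base_coords_def)
    have "Base_coeff i \<in> affine_generators d n" using that by (simp add: affine_generators_def)
    then have "monomial_weight d (snd p) + (d - i) = N" using weights p by fastforce
    then have "fiber_degree (snd p) + (d - i) \<le> N"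
      using fiber_degree_le_monomial_weight[of "snd p" d] by linarith
    moreover have "fiber_degree L' = length L'"
      using L'(3) unfolding fiber_degree_def by (subst filter_id_conv[THEN iffD2]) auto
    ultimately have "fiber_degree (snd p @ L') < fiber_degree L"
      using that L'(2) by (simp add: fiber_degree_def)
    then show "in_base_span G (Pd_n d n) (monomial (snd p @ L'))" by (rule IH)
  qed
  have "in_base_span G (Pd_n d n) (\<lambda>x. \<Sum>i<d. T i x)"
    using T_span by (intro in_base_span_sum) auto
  then show ?thesis by (rule in_base_span_cong) (simp add: monomial_eq)
qed

lemma monomial_in_base_span:
  fixes d n :: nat and N :: "nat + nat \<times> nat \<Rightarrow> nat"
  defines "G \<equiv> monomial ` {L. set L \<subseteq> fiber_coords d n \<and> length L \<le> (\<Sum>y\<in>fiber_coords d n. N y - 1)}"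
  assumes cert: "\<And>y x. y \<in> fiber_coords d n \<Longrightarrow> point_coord x y ^ N y
      = (\<Sum>g\<in>affine_generators d n. lincomb (R y g) x * generator d n y g x)"
    and weights: "\<And>y. y \<in> fiber_coords d n \<Longrightarrow> \<forall>g\<in>affine_generators d n. \<forall>p\<in>set (R y g).
      monomial_weight d (snd p) + generator_weight d g = N y"
  shows "in_base_span G (Pd_n d n) (monomial L)"
proof (induction "fiber_degree L" arbitrary: L rule: less_induct)
  case less
  let ?Z = "fiber_coords d n" and ?Lz = "filter (\<lambda>v. \<not> isl v) L"
  have finite_G: "finite G"
    unfolding G_def using finite_lists_length_le[OF finite_fiber_coords] by simp
  consider "\<not> set ?Lz \<subseteq> ?Z" | "set ?Lz \<subseteq> ?Z" "length ?Lz \<le> (\<Sum>y\<in>?Z. N y - 1)"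
    | "set ?Lz \<subseteq> ?Z" "(\<Sum>y\<in>?Z. N y - 1) < length ?Lz" by linarith
  then show ?case
  proof cases
    case 1
    then obtain v where "v \<in> set L" "\<not> isl v" "v \<notin> ?Z" by auto
    then show ?thesis by (intro in_base_span_zero_on) (rule monomial_vanishes_on_Pd_n)
  next
    case 2
    then have "in_base_span G (Pd_n d n) (\<lambda>x. base_monomial L (fst x) * monomial ?Lz x)"
      unfolding G_def
      by (intro in_base_span_base_mult in_base_span_generator base_monomial_in_polys
          finite_G[unfolded G_def])
         auto
    then show ?thesis by (rule in_base_span_cong) (simp add: monomial_split_base[symmetric])
  next
    case 3
    then obtain y where y: "y \<in> ?Z" "N y \<le> count_list ?Lz y"
      using pigeonhole_count_list[OF finite_fiber_coords 3] by blast
    have "\<not> isl y" using y(1) by (auto simp: fiber_coords_def)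
    moreover have "count_list ?Lz y \<le> count_list L y" by (induction L) auto
    ultimately have "N y \<le> count_list L y" using y(2) by linarith
    then show ?thesis
      using in_base_span_long_monomial[OF cert[OF y(1)] weights[OF y(1)] \<open>\<not> isl y\<close>] less by blast
  qed
qed

lemma finite_projection_if_Pd0_n_trivial:
  assumes d: "d \<ge> 1" and n: "n \<ge> 1" and fiber: "Pd0_n d n = {\<lambda>k m. 0}"
  shows "finite_projection (Pd_n d n)"
proof -
  let ?Z = "fiber_coords d n" and ?J = "affine_generators d n"
  have "\<forall>y\<in>?Z. \<exists>N R. (\<forall>x. point_coord x y ^ N = (\<Sum>g\<in>?J. lincomb (R g) x * generator d n y g x))
      \<and> (\<forall>g\<in>?J. \<forall>p\<in>set (R g). monomial_weight d (snd p) + generator_weight d g = N)"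
    using homogeneous_certificate[OF d n fiber] by (auto simp: fiber_coords_def)
  from bchoice[OF this] obtain N where "\<forall>y\<in>?Z. \<exists>R. (\<forall>x. point_coord x y ^ N y
        = (\<Sum>g\<in>?J. lincomb (R g) x * generator d n y g x))
      \<and> (\<forall>g\<in>?J. \<forall>p\<in>set (R g). monomial_weight d (snd p) + generator_weight d g = N y)"
    ..
  from bchoice[OF this] obtain R where "\<forall>y\<in>?Z. (\<forall>x. point_coord x y ^ N y
        = (\<Sum>g\<in>?J. lincomb (R y g) x * generator d n y g x))
      \<and> (\<forall>g\<in>?J. \<forall>p\<in>set (R y g). monomial_weight d (snd p) + generator_weight d g = N y)"
    ..
  then have cert: "\<And>y x. y \<in> ?Z \<Longrightarrow> point_coord x y ^ N y
        = (\<Sum>g\<in>?J. lincomb (R y g) x * generator d n y g x)"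
    and weights: "\<And>y. y \<in> ?Z \<Longrightarrow>
        \<forall>g\<in>?J. \<forall>p\<in>set (R y g). monomial_weight d (snd p) + generator_weight d g = N y"
    by blast+
  define G where "G = monomial ` {L. set L \<subseteq> ?Z \<and> length L \<le> (\<Sum>y\<in>?Z. N y - 1)}"
  have "finite G" unfolding G_def using finite_lists_length_le[OF finite_fiber_coords] by simp
  moreover have "G \<subseteq> polyfun total_coords" unfolding G_def using monomial_in_polys by blast
  moreover have "in_base_span G (Pd_n d n) (monomial L)" for L
    unfolding G_def using monomial_in_base_span[where N = N and R = R, OF cert weights] .
  then have "in_base_span G (Pd_n d n) f" if "f \<in> polyfun total_coords" for f
    using that by (rule in_base_span_if_monomials)
  ultimately show ?thesis unfolding finite_projection_iff_in_base_span by blast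
qed

theorem lemma4p3:
  fixes d n :: nat
  assumes "d \<ge> 1" and "n \<ge> 1"
  shows "finite_projection (Pd_n d n) \<longleftrightarrow> Pd0_n d n = {\<lambda>k m. 0}"
  using Pd0_n_trivial_if_finite_projection finite_projection_if_Pd0_n_trivial assms by blast

end
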